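(* Let $\mathcal{Q}$ be a poset and let $M,N$ be finitely encoded persistence modules over $\mathcal{Q}$. Then there exist a finite poset $\mathcal P$, an order-preserving map $e\colon\mathcal{Q}\to\mathcal P$, pointwise finite-dimensional modules $M'',N''\colon\mathcal P\to\mathrm{Vect}$ and isomorphisms $M\cong e^*M''$ and $N\cong e^*N''$. Furthermore, if $M$ and $N$ both admit finite encodings of class $\mathfrak X$ for an algebra $\mathfrak X$ on $\mathcal{Q}$, then $e$ can be chosen so that all its fibers belong to $\mathfrak X$.
   Context: $\mathrm{Vect}$ is the category of finite-dimensional vector spaces over a field; a persistence module over $\mathcal{Q}$ is a functor $\mathcal{Q}\to\mathrm{Vect}$. A finite encoding of $M$ is an order-preserving map $e\colon\mathcal{Q}\to\mathcal P$ with $\mathcal P$ a finite poset, a pointwise finite-dimensional $M'\colon\mathcal P\to\mathrm{Vect}$ and an isomorphism $M\cong e^*M'=M'\circ e$; $M$ is finitely encoded if it admits one. An algebra on $\mathcal{Q}$ is a family of subsets containing $\emptyset$, closed under complements and finite unions; the encoding is of class $\mathfrak X$ if every fiber $e^{-1}(p)$ belongs to $\mathfrak X$. *)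

theory Defs
  imports Main
begin

definition poset_on :: "'a set \<Rightarrow> ('a \<Rightarrow> 'a \<Rightarrow> bool) \<Rightarrow> bool" where
  "poset_on S le \<longleftrightarrow>
     (\<forall>x\<in>S. le x x) \<and>
     (\<forall>x\<in>S. \<forall>y\<in>S. le x y \<and> le y x \<longrightarrow> x = y) \<and>
     (\<forall>x\<in>S. \<forall>y\<in>S. \<forall>z\<in>S. le x y \<and> le y z \<longrightarrow> le x z)"

text \<open>Finite-dimensional vector spaces over a field 'k are represented (up to isomorphism)
by the coordinate spaces k^n, realised as functions nat => 'k vanishing from index n on.\<close>

definition kvec :: "nat \<Rightarrow> (nat \<Rightarrow> 'k::field) set" where
  "kvec n = {v. \<forall>i\<ge>n. v i = 0}"

definition linear_on :: "(nat \<Rightarrow> 'k::field) set \<Rightarrow> ((nat \<Rightarrow> 'k) \<Rightarrow> (nat \<Rightarrow> 'k)) \<Rightarrow> bool" where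
  "linear_on V g \<longleftrightarrow>
     (\<forall>u\<in>V. \<forall>v\<in>V. g (\<lambda>i. u i + v i) = (\<lambda>i. g u i + g v i)) \<and>
     (\<forall>c. \<forall>v\<in>V. g (\<lambda>i. c * v i) = (\<lambda>i. c * g v i))"

text \<open>A persistence module: a dimension at every point, and a structure map for every
pair (only used when x <= y).\<close>

type_synonym ('a, 'k) pmod = "('a \<Rightarrow> nat) \<times> ('a \<Rightarrow> 'a \<Rightarrow> (nat \<Rightarrow> 'k) \<Rightarrow> (nat \<Rightarrow> 'k))"

definition is_pmod :: "'a set \<Rightarrow> ('a \<Rightarrow> 'a \<Rightarrow> bool) \<Rightarrow> ('a, 'k::field) pmod \<Rightarrow> bool" where
  "is_pmod S le M \<longleftrightarrow>
     (\<forall>x\<in>S. \<forall>y\<in>S. le x y \<longrightarrow>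
        linear_on (kvec (fst M x)) (snd M x y) \<and> snd M x y ` kvec (fst M x) \<subseteq> kvec (fst M y)) \<and>
     (\<forall>x\<in>S. \<forall>v\<in>kvec (fst M x). snd M x x v = v) \<and>
     (\<forall>x\<in>S. \<forall>y\<in>S. \<forall>z\<in>S. le x y \<and> le y z \<longrightarrow>
        (\<forall>v\<in>kvec (fst M x). snd M y z (snd M x y v) = snd M x z v))"

definition pmod_iso :: "'a set \<Rightarrow> ('a \<Rightarrow> 'a \<Rightarrow> bool) \<Rightarrow> ('a, 'k::field) pmod \<Rightarrow> ('a, 'k) pmod \<Rightarrow> bool" where
  "pmod_iso S le M N \<longleftrightarrow>
     (\<exists>\<phi>. (\<forall>x\<in>S. linear_on (kvec (fst M x)) (\<phi> x) \<and>
                   bij_betw (\<phi> x) (kvec (fst M x)) (kvec (fst N x))) \<and>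
          (\<forall>x\<in>S. \<forall>y\<in>S. le x y \<longrightarrow>
             (\<forall>v\<in>kvec (fst M x). \<phi> y (snd M x y v) = snd N x y (\<phi> x v))))"

definition order_preserving :: "'a set \<Rightarrow> ('a \<Rightarrow> 'a \<Rightarrow> bool) \<Rightarrow> 'b set \<Rightarrow> ('b \<Rightarrow> 'b \<Rightarrow> bool)
     \<Rightarrow> ('a \<Rightarrow> 'b) \<Rightarrow> bool" where
  "order_preserving S le P leP e \<longleftrightarrow>
     (\<forall>x\<in>S. e x \<in> P) \<and> (\<forall>x\<in>S. \<forall>y\<in>S. le x y \<longrightarrow> leP (e x) (e y))"

definition pullback :: "('a \<Rightarrow> 'b) \<Rightarrow> ('b, 'k) pmod \<Rightarrow> ('a, 'k) pmod" where
  "pullback e M' = (\<lambda>x. fst M' (e x), \<lambda>x y. snd M' (e x) (e y))"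

definition finite_encoding :: "'a set \<Rightarrow> ('a \<Rightarrow> 'a \<Rightarrow> bool) \<Rightarrow> ('a, 'k::field) pmod
     \<Rightarrow> nat set \<Rightarrow> (nat \<Rightarrow> nat \<Rightarrow> bool) \<Rightarrow> ('a \<Rightarrow> nat) \<Rightarrow> (nat, 'k) pmod \<Rightarrow> bool" where
  "finite_encoding S le M P leP e M' \<longleftrightarrow>
     finite P \<and> poset_on P leP \<and> order_preserving S le P leP e \<and>
     is_pmod P leP M' \<and> pmod_iso S le M (pullback e M')"

definition finitely_encoded :: "'a set \<Rightarrow> ('a \<Rightarrow> 'a \<Rightarrow> bool) \<Rightarrow> ('a, 'k::field) pmod \<Rightarrow> bool" where
  "finitely_encoded S le M \<longleftrightarrow> (\<exists>P leP e M'. finite_encoding S le M P leP e M')"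

definition algebra_on :: "'a set \<Rightarrow> 'a set set \<Rightarrow> bool" where
  "algebra_on S X \<longleftrightarrow> X \<subseteq> Pow S \<and> {} \<in> X \<and> (\<forall>A\<in>X. S - A \<in> X) \<and>
     (\<forall>A\<in>X. \<forall>B\<in>X. A \<union> B \<in> X)"

definition fibers_in :: "'a set \<Rightarrow> 'a set set \<Rightarrow> nat set \<Rightarrow> ('a \<Rightarrow> nat) \<Rightarrow> bool" where
  "fibers_in S X P e \<longleftrightarrow> (\<forall>p\<in>P. {x\<in>S. e x = p} \<in> X)"

definition finitely_encoded_class :: "'a set \<Rightarrow> ('a \<Rightarrow> 'a \<Rightarrow> bool) \<Rightarrow> 'a set set
     \<Rightarrow> ('a, 'k::field) pmod \<Rightarrow> bool" where
  "finitely_encoded_class S le X M \<longleftrightarrow>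
     (\<exists>P leP e M'. finite_encoding S le M P leP e M' \<and> fibers_in S X P e)"

end

theory Submission
  imports Defs "HOL-Library.Nat_Bijection"
begin

text \<open>Given finite encodings \<open>e\<^sub>1 : Q \<rightarrow> P\<^sub>1\<close> of \<open>M\<close> and \<open>e\<^sub>2 : Q \<rightarrow> P\<^sub>2\<close> of \<open>N\<close>, the map
  \<open>q \<mapsto> (e\<^sub>1 q, e\<^sub>2 q)\<close> into the finite product poset \<open>P\<^sub>1 \<times> P\<^sub>2\<close> encodes both modules:
  pull \<open>M\<^sub>1\<close> and \<open>N\<^sub>1\<close> back along the two projections. Each fiber of the paired map is the
  intersection of a fiber of \<open>e\<^sub>1\<close> with a fiber of \<open>e\<^sub>2\<close>, so it stays in any algebra
  containing the fibers of both.\<close>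

lemma algebra_on_Int:
  assumes "algebra_on S X" "A \<in> X" "B \<in> X"
  shows "A \<inter> B \<in> X"
proof -
  have "A \<subseteq> S" "B \<subseteq> S" using assms unfolding algebra_on_def by auto
  then have "A \<inter> B = S - ((S - A) \<union> (S - B))" by blast
  also have "\<dots> \<in> X" using assms unfolding algebra_on_def by blast
  finally show ?thesis .
qed

lemma pullback_pullback: "pullback e (pullback f M) = pullback (f \<circ> e) M"
  by (simp add: pullback_def)

lemma is_pmod_pullback:
  assumes "order_preserving S le P leP f" "is_pmod P leP M"
  shows "is_pmod S le (pullback f M)"
  using assms unfolding order_preserving_def is_pmod_def pullback_def by simp

lemma finite_encoding_refine:
  assumes "finite_encoding S le M P' leP' e' M'"
    and "finite P" "poset_on P leP" "order_preserving S le P leP e"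
    and "order_preserving P leP P' leP' f" "f \<circ> e = e'"
  shows "finite_encoding S le M P leP e (pullback f M')"
proof -
  have "is_pmod P leP (pullback f M')"
    using assms(1) is_pmod_pullback[OF assms(5)] unfolding finite_encoding_def by blast
  then show ?thesis
    using assms unfolding finite_encoding_def pullback_pullback by simp
qed

text \<open>Finite posets live on \<open>nat\<close>, so the product \<open>P\<^sub>1 \<times> P\<^sub>2\<close> is transported along the
  Cantor pairing \<open>prod_encode\<close>.\<close>

definition encoded_product :: "nat set \<Rightarrow> nat set \<Rightarrow> nat set" where
  "encoded_product P\<^sub>1 P\<^sub>2 = prod_encode ` (P\<^sub>1 \<times> P\<^sub>2)"

definition encoded_product_le ::
    "(nat \<Rightarrow> nat \<Rightarrow> bool) \<Rightarrow> (nat \<Rightarrow> nat \<Rightarrow> bool) \<Rightarrow> nat \<Rightarrow> nat \<Rightarrow> bool" where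
  "encoded_product_le l\<^sub>1 l\<^sub>2 x y \<longleftrightarrow>
     l\<^sub>1 (fst (prod_decode x)) (fst (prod_decode y)) \<and> l\<^sub>2 (snd (prod_decode x)) (snd (prod_decode y))"

lemma encoded_product_le_prod_encode [simp]:
  "encoded_product_le l\<^sub>1 l\<^sub>2 (prod_encode (a, b)) (prod_encode (c, d)) \<longleftrightarrow> l\<^sub>1 a c \<and> l\<^sub>2 b d"
  by (simp add: encoded_product_le_def)

lemma finite_encoded_product:
  "finite P\<^sub>1 \<Longrightarrow> finite P\<^sub>2 \<Longrightarrow> finite (encoded_product P\<^sub>1 P\<^sub>2)"
  by (simp add: encoded_product_def)

lemma poset_on_encoded_product:
  assumes "poset_on P\<^sub>1 l\<^sub>1" "poset_on P\<^sub>2 l\<^sub>2"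
  shows "poset_on (encoded_product P\<^sub>1 P\<^sub>2) (encoded_product_le l\<^sub>1 l\<^sub>2)"
  unfolding poset_on_def encoded_product_def
proof (intro conjI ballI impI; clarsimp)
  show "l\<^sub>1 a a \<and> l\<^sub>2 b b" if "a \<in> P\<^sub>1" "b \<in> P\<^sub>2" for a b
    using assms that unfolding poset_on_def by blast
  show "a = c \<and> b = d"
    if "a \<in> P\<^sub>1" "b \<in> P\<^sub>2" "c \<in> P\<^sub>1" "d \<in> P\<^sub>2" "l\<^sub>1 a c" "l\<^sub>2 b d" "l\<^sub>1 c a" "l\<^sub>2 d b"
    for a b c d
    using assms that unfolding poset_on_def by blast
  show "l\<^sub>1 a e \<and> l\<^sub>2 b f"
    if "a \<in> P\<^sub>1" "b \<in> P\<^sub>2" "c \<in> P\<^sub>1" "d \<in> P\<^sub>2" "e \<in> P\<^sub>1" "f \<in> P\<^sub>2"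
      "l\<^sub>1 a c" "l\<^sub>2 b d" "l\<^sub>1 c e" "l\<^sub>2 d f"
    for a b c d e f
    using assms that unfolding poset_on_def by blast
qed

lemma order_preserving_encoded_fst:
  "order_preserving (encoded_product P\<^sub>1 P\<^sub>2) (encoded_product_le l\<^sub>1 l\<^sub>2) P\<^sub>1 l\<^sub>1 (fst \<circ> prod_decode)"
  unfolding order_preserving_def encoded_product_def by auto

lemma order_preserving_encoded_snd:
  "order_preserving (encoded_product P\<^sub>1 P\<^sub>2) (encoded_product_le l\<^sub>1 l\<^sub>2) P\<^sub>2 l\<^sub>2 (snd \<circ> prod_decode)"
  unfolding order_preserving_def encoded_product_def by auto

lemma order_preserving_encoded_pair:
  assumes "order_preserving S le P\<^sub>1 l\<^sub>1 e\<^sub>1" "order_preserving S le P\<^sub>2 l\<^sub>2 e\<^sub>2"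
  shows "order_preserving S le (encoded_product P\<^sub>1 P\<^sub>2) (encoded_product_le l\<^sub>1 l\<^sub>2)
           (\<lambda>q. prod_encode (e\<^sub>1 q, e\<^sub>2 q))"
  using assms unfolding order_preserving_def encoded_product_def by auto

lemma fibers_in_encoded_pair:
  assumes "algebra_on S X" "fibers_in S X P\<^sub>1 e\<^sub>1" "fibers_in S X P\<^sub>2 e\<^sub>2"
  shows "fibers_in S X (encoded_product P\<^sub>1 P\<^sub>2) (\<lambda>q. prod_encode (e\<^sub>1 q, e\<^sub>2 q))"
  unfolding fibers_in_def
proof
  fix p assume "p \<in> encoded_product P\<^sub>1 P\<^sub>2"
  then obtain a b where ab: "a \<in> P\<^sub>1" "b \<in> P\<^sub>2" "p = prod_encode (a, b)"
    unfolding encoded_product_def by auto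
  have "{q\<in>S. prod_encode (e\<^sub>1 q, e\<^sub>2 q) = p} = {q\<in>S. e\<^sub>1 q = a} \<inter> {q\<in>S. e\<^sub>2 q = b}"
    using ab(3) by auto
  also have "\<dots> \<in> X"
    using algebra_on_Int[OF assms(1)] assms(2,3) ab(1,2) unfolding fibers_in_def by blast
  finally show "{q\<in>S. prod_encode (e\<^sub>1 q, e\<^sub>2 q) = p} \<in> X" .
qed

lemma finite_encodings_encoded_pair:
  assumes M: "finite_encoding S le M P\<^sub>1 l\<^sub>1 e\<^sub>1 M\<^sub>1" and N: "finite_encoding S le N P\<^sub>2 l\<^sub>2 e\<^sub>2 N\<^sub>1"
  shows "finite_encoding S le M (encoded_product P\<^sub>1 P\<^sub>2) (encoded_product_le l\<^sub>1 l\<^sub>2)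
           (\<lambda>q. prod_encode (e\<^sub>1 q, e\<^sub>2 q)) (pullback (fst \<circ> prod_decode) M\<^sub>1)"
    and "finite_encoding S le N (encoded_product P\<^sub>1 P\<^sub>2) (encoded_product_le l\<^sub>1 l\<^sub>2)
           (\<lambda>q. prod_encode (e\<^sub>1 q, e\<^sub>2 q)) (pullback (snd \<circ> prod_decode) N\<^sub>1)"
proof -
  have "finite P\<^sub>1" "poset_on P\<^sub>1 l\<^sub>1" "order_preserving S le P\<^sub>1 l\<^sub>1 e\<^sub>1"
    and "finite P\<^sub>2" "poset_on P\<^sub>2 l\<^sub>2" "order_preserving S le P\<^sub>2 l\<^sub>2 e\<^sub>2"
    using M N unfolding finite_encoding_def by simp_all
  note product = finite_encoded_product[OF \<open>finite P\<^sub>1\<close> \<open>finite P\<^sub>2\<close>]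
    poset_on_encoded_product[OF \<open>poset_on P\<^sub>1 l\<^sub>1\<close> \<open>poset_on P\<^sub>2 l\<^sub>2\<close>]
    order_preserving_encoded_pair[OF \<open>order_preserving S le P\<^sub>1 l\<^sub>1 e\<^sub>1\<close>
      \<open>order_preserving S le P\<^sub>2 l\<^sub>2 e\<^sub>2\<close>]
  have "fst \<circ> prod_decode \<circ> (\<lambda>q. prod_encode (e\<^sub>1 q, e\<^sub>2 q)) = e\<^sub>1"
    and "snd \<circ> prod_decode \<circ> (\<lambda>q. prod_encode (e\<^sub>1 q, e\<^sub>2 q)) = e\<^sub>2"
    by (simp_all add: comp_def)
  from finite_encoding_refine[OF M product order_preserving_encoded_fst this(1)]
    finite_encoding_refine[OF N product order_preserving_encoded_snd this(2)]
  show "finite_encoding S le M (encoded_product P\<^sub>1 P\<^sub>2) (encoded_product_le l\<^sub>1 l\<^sub>2)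
          (\<lambda>q. prod_encode (e\<^sub>1 q, e\<^sub>2 q)) (pullback (fst \<circ> prod_decode) M\<^sub>1)"
    and "finite_encoding S le N (encoded_product P\<^sub>1 P\<^sub>2) (encoded_product_le l\<^sub>1 l\<^sub>2)
          (\<lambda>q. prod_encode (e\<^sub>1 q, e\<^sub>2 q)) (pullback (snd \<circ> prod_decode) N\<^sub>1)"
    by this
qed

theorem mainTheorem19:
  fixes Q :: "'q set" and le :: "'q \<Rightarrow> 'q \<Rightarrow> bool"
    and M N :: "('q, 'k::field) pmod"
  assumes "poset_on Q le"
    and "is_pmod Q le M" and "is_pmod Q le N"
    and "finitely_encoded Q le M" and "finitely_encoded Q le N"
  shows "(\<exists>(P::nat set) leP e M'' N''.
            finite P \<and> poset_on P leP \<and> order_preserving Q le P leP e \<and>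
            is_pmod P leP M'' \<and> is_pmod P leP N'' \<and>
            pmod_iso Q le M (pullback e M'') \<and> pmod_iso Q le N (pullback e N''))
       \<and> (\<forall>X. algebra_on Q X \<longrightarrow> finitely_encoded_class Q le X M \<longrightarrow>
              finitely_encoded_class Q le X N \<longrightarrow>
            (\<exists>(P::nat set) leP e M'' N''.
               finite P \<and> poset_on P leP \<and> order_preserving Q le P leP e \<and>
               is_pmod P leP M'' \<and> is_pmod P leP N'' \<and>
               pmod_iso Q le M (pullback e M'') \<and> pmod_iso Q le N (pullback e N'') \<and>
               fibers_in Q X P e))"
proof (intro conjI allI impI, goal_cases)
  case 1
  obtain P\<^sub>1 l\<^sub>1 e\<^sub>1 M\<^sub>1 P\<^sub>2 l\<^sub>2 e\<^sub>2 N\<^sub>1 where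
    "finite_encoding Q le M P\<^sub>1 l\<^sub>1 e\<^sub>1 M\<^sub>1" "finite_encoding Q le N P\<^sub>2 l\<^sub>2 e\<^sub>2 N\<^sub>1"
    using assms(4,5) unfolding finitely_encoded_def by blast
  from finite_encodings_encoded_pair[OF this] show ?case
    unfolding finite_encoding_def by meson
next
  case (2 X)
  obtain P\<^sub>1 l\<^sub>1 e\<^sub>1 M\<^sub>1 P\<^sub>2 l\<^sub>2 e\<^sub>2 N\<^sub>1 where
    M: "finite_encoding Q le M P\<^sub>1 l\<^sub>1 e\<^sub>1 M\<^sub>1" "fibers_in Q X P\<^sub>1 e\<^sub>1" and
    N: "finite_encoding Q le N P\<^sub>2 l\<^sub>2 e\<^sub>2 N\<^sub>1" "fibers_in Q X P\<^sub>2 e\<^sub>2"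
    using 2 unfolding finitely_encoded_class_def by blast
  from finite_encodings_encoded_pair[OF M(1) N(1)]
    fibers_in_encoded_pair[OF \<open>algebra_on Q X\<close> M(2) N(2)]
  show ?case unfolding finite_encoding_def by meson
qed

end
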